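(* Let $H$ be a $3$-graph, $K_H=3v(H)^3$, let $\varepsilon\le 1/5$ and $C\ge 1$ be constants. Then there is $n_0$ such that the following holds for all $n\ge n_0$. Let $G$ be a $3$-partite $3$-graph with vertex classes $X,Y,Z$ each of size $n$, and let $\mathcal{L}$ be a bipartite graph between $X$ and $Y$ with exactly $(C/2)n^{2-\varepsilon}$ edges, such that the number of $H$-forbidden $4$-cycles (with respect to $G$) contained in $\mathcal{L}$ is at most $K_H\, n^{3+1/5-\varepsilon}$. Then there is a subset $Y'\subseteq Y$ with $|Y'|\ge n^{1-\varepsilon}/4$ such that (1) at most $(400/C)\binom{|Y'|}{2}$ pairs of vertices of $Y'$ are bad, and (2) at most $(600/C)\binom{|Y'|}{3}$ triples of vertices of $Y'$ are bad.
   Context: A $3$-graph is a $3$-uniform hypergraph; $v(\cdot)$ denotes the number of vertices. $G$ is $3$-partite with classes $X,Y,Z$: every edge contains exactly one vertex of each class. For $z\in Z$, the link graph $\mathcal{L}_z$ is the bipartite graph between $X$ and $Y$ with edges the pairs $xy$ such that $\{x,y,z\}$ is an edge of $G$. A $4$-cycle between $X$ and $Y$ is a $4$-cycle in the complete bipartite graph on $X\cup Y$; it is the boundary of a $4$-disk with centre $z\in Z$ exactly when it is contained in $\mathcal{L}_z$. With $K_H=3v(H)^3$, such a $4$-cycle is $H$-forbidden if the number of $z\in Z$ with the cycle contained in $\mathcal{L}_z$ is at most $K_H$, and $H$-admissible otherwise. For a set $S$ of vertices, $\Gamma(S)$ denotes the set of common neighbours of $S$ in the bipartite graph $\mathcal{L}$;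 $\Gamma(y_1,y_2)=\Gamma(\{y_1,y_2\})$ etc. A pair $y_1y_2$ of distinct vertices of $Y$ is good if $|\Gamma(y_1,y_2)|\ge n^{1-2\varepsilon}$ and the number of $H$-forbidden $4$-cycles in $\mathcal{L}$ containing both $y_1$ and $y_2$ is at most $(K_H/C)\,n^{1-3\varepsilon}\,|\Gamma(y_1,y_2)|$; otherwise it is bad. A triple $y_1y_2y_3$ of distinct vertices of $Y$ is good if $|\Gamma(y_1,y_2,y_3)|\ge n^{1-3\varepsilon}$, and bad otherwise. *)

theory Defs
  imports "HOL-Analysis.Analysis"
begin

definition three_graph :: "'b set \<Rightarrow> 'b set set \<Rightarrow> bool" where
  "three_graph V E \<longleftrightarrow> finite V \<and> (\<forall>e\<in>E. e \<subseteq> V \<and> card e = 3)"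

definition K_H :: "'b set \<Rightarrow> nat" where
  "K_H VH = 3 * card VH ^ 3"

definition tripartite_3graph :: "'a set \<Rightarrow> 'a set \<Rightarrow> 'a set \<Rightarrow> 'a set set \<Rightarrow> bool" where
  "tripartite_3graph X Y Z G \<longleftrightarrow>
     finite X \<and> finite Y \<and> finite Z \<and>
     X \<inter> Y = {} \<and> X \<inter> Z = {} \<and> Y \<inter> Z = {} \<and>
     three_graph (X \<union> Y \<union> Z) G \<and>
     (\<forall>e\<in>G. card (e \<inter> X) = 1 \<and> card (e \<inter> Y) = 1 \<and> card (e \<inter> Z) = 1)"

definition link :: "'a set \<Rightarrow> 'a set \<Rightarrow> 'a set set \<Rightarrow> 'a \<Rightarrow> ('a \<times> 'a) set" where
  "link X Y G z = {(x, y). x \<in> X \<and> y \<in> Y \<and> {x, y, z} \<in> G}"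

text \<open>A 4-cycle between X and Y in the complete bipartite graph is determined by
  its two X-vertices A and its two Y-vertices B (edges A \<times> B).\<close>
definition four_cycles :: "'a set \<Rightarrow> 'a set \<Rightarrow> ('a set \<times> 'a set) set" where
  "four_cycles X Y = {(A, B). A \<subseteq> X \<and> card A = 2 \<and> B \<subseteq> Y \<and> card B = 2}"

definition cycle_in :: "'a set \<times> 'a set \<Rightarrow> ('a \<times> 'a) set \<Rightarrow> bool" where
  "cycle_in c L \<longleftrightarrow> fst c \<times> snd c \<subseteq> L"

definition H_forbidden :: "nat \<Rightarrow> 'a set \<Rightarrow> 'a set \<Rightarrow> 'a set \<Rightarrow> 'a set set \<Rightarrow> 'a set \<times> 'a set \<Rightarrow> bool" where
  "H_forbidden K X Y Z G c \<longleftrightarrow> card {z \<in> Z. cycle_in c (link X Y G z)} \<le> K"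

definition forbidden_cycles_in ::
  "nat \<Rightarrow> 'a set \<Rightarrow> 'a set \<Rightarrow> 'a set \<Rightarrow> 'a set set \<Rightarrow> ('a \<times> 'a) set \<Rightarrow> ('a set \<times> 'a set) set" where
  "forbidden_cycles_in K X Y Z G L =
     {c \<in> four_cycles X Y. cycle_in c L \<and> H_forbidden K X Y Z G c}"

definition Gamma :: "'a set \<Rightarrow> ('a \<times> 'a) set \<Rightarrow> 'a set \<Rightarrow> 'a set" where
  "Gamma X L S = {x \<in> X. \<forall>y\<in>S. (x, y) \<in> L}"

definition good_pair ::
  "nat \<Rightarrow> real \<Rightarrow> real \<Rightarrow> nat \<Rightarrow> 'a set \<Rightarrow> 'a set \<Rightarrow> 'a set \<Rightarrow> 'a set set \<Rightarrow> ('a \<times> 'a) set \<Rightarrow> 'a set \<Rightarrow> bool" where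
  "good_pair n \<epsilon> C K X Y Z G L P \<longleftrightarrow>
     real (card (Gamma X L P)) \<ge> real n powr (1 - 2 * \<epsilon>) \<and>
     real (card {c \<in> forbidden_cycles_in K X Y Z G L. P \<subseteq> snd c})
       \<le> (real K / C) * real n powr (1 - 3 * \<epsilon>) * real (card (Gamma X L P))"

definition good_triple :: "nat \<Rightarrow> real \<Rightarrow> 'a set \<Rightarrow> ('a \<times> 'a) set \<Rightarrow> 'a set \<Rightarrow> bool" where
  "good_triple n \<epsilon> X L T \<longleftrightarrow> real (card (Gamma X L T)) \<ge> real n powr (1 - 3 * \<epsilon>)"

end

theory Submission
  imports Defs
begin

text \<open>Take Y' to be the neighbourhood N(x) in L of one well-chosen vertex x \<in> X. Summed over x, the
  numbers of bad pairs and triples inside N(x) are the sums of |\<Gamma>(S)| over bad pairs and triples S.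
  A bad triple has |\<Gamma>(T)| < n^(1-3\<epsilon>); for a bad pair, |\<Gamma>(P)| is either below n^(1-2\<epsilon>) or
  dominated by the number of forbidden 4-cycles through P, and every forbidden 4-cycle passes through
  exactly one pair of Y. With D = n^(1-\<epsilon>) the average degree is \<mu> = CD/2, and the tangent bound
  d^2 min(d, 2\<mu>) \<ge> 3\<mu>^2 d - 2\<mu>^3 shows that the weight
  d(x)^2 min(d(x), CD) - (C^2 D/100) b2(x) - (C/20) b3(x) - D^3/64 has positive sum over X.
  A vertex x of positive weight has d(x) \<ge> D/4 and few bad pairs and triples in its neighbourhood.\<close>

lemma card_subsets_of_card_le_pow:
  assumes "finite Y"
  shows "card {P. P \<subseteq> Y \<and> card P = k \<and> Q P} \<le> card Y ^ k"
proof -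
  have "card {P. P \<subseteq> Y \<and> card P = k \<and> Q P} \<le> card {P. P \<subseteq> Y \<and> card P = k}"
    using assms by (intro card_mono) auto
  also have "\<dots> \<le> card Y ^ k"
    using binomial_le_pow[of k "card Y"]
    by (cases "k \<le> card Y") (auto simp: n_subsets[OF assms] binomial_eq_0)
  finally show ?thesis .
qed

lemma sum_card_supersets_le_card:
  assumes "finite S" "finite B" "0 < k"
    and "\<And>c. c \<in> S \<Longrightarrow> card (f c) = k" and "\<And>P. P \<in> B \<Longrightarrow> card P = k"
  shows "(\<Sum>P\<in>B. card {c\<in>S. P \<subseteq> f c}) \<le> card S"
proof -
  have "{P\<in>B. P \<subseteq> f c} \<subseteq> {f c}" if "c \<in> S" for c
  proof
    fix P assume P: "P \<in> {P\<in>B. P \<subseteq> f c}"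
    have "finite (f c)" using that assms(3,4) card_ge_0_finite by metis
    moreover have "card P = card (f c)" using P that assms(4,5) by simp
    ultimately show "P \<in> {f c}" using P card_subset_eq by blast
  qed
  then have "card {P\<in>B. P \<subseteq> f c} \<le> 1" if "c \<in> S" for c
    using that card_mono[of "{f c}"] by fastforce
  then have "(\<Sum>c\<in>S. card {P\<in>B. P \<subseteq> f c}) \<le> card S"
    using sum_mono[of S "\<lambda>c. card {P\<in>B. P \<subseteq> f c}" "\<lambda>_. 1"] by simp
  then show ?thesis
    using sum_multicount_gen[OF assms(2,1), of "\<lambda>P c. P \<subseteq> f c" "\<lambda>c. card {P\<in>B. P \<subseteq> f c}"]
    by simp
qed

lemma sq_mult_min_ge_tangent:
  fixes d \<mu> :: real
  assumes "0 \<le> d" "0 \<le> \<mu>"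
  shows "3 * \<mu>^2 * d - 2 * \<mu>^3 \<le> d^2 * min d (2*\<mu>)"
proof (cases "d \<le> 2*\<mu>")
  case True
  have "d^2 * d - (3 * \<mu>^2 * d - 2 * \<mu>^3) = (d - \<mu>)^2 * (d + 2*\<mu>)"
    by (simp add: algebra_simps power2_eq_square power3_eq_cube)
  moreover have "0 \<le> (d - \<mu>)^2 * (d + 2*\<mu>)" using assms by simp
  ultimately show ?thesis using True by (simp add: min_def)
next
  case False
  have "d^2 * (2*\<mu>) - (3 * \<mu>^2 * d - 2 * \<mu>^3) = \<mu> * (2 * (d - 3/4*\<mu>)^2 + 7/8*\<mu>^2)"
    by (simp add: algebra_simps power2_eq_square power3_eq_cube)
  moreover have "0 \<le> \<mu> * (2 * (d - 3/4*\<mu>)^2 + 7/8*\<mu>^2)" using assms by simp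
  ultimately show ?thesis using False by (simp add: min_def)
qed

lemma sum_sq_mult_min_ge:
  fixes d :: "'a \<Rightarrow> real" and \<mu> :: real
  assumes "finite A" "\<And>a. a \<in> A \<Longrightarrow> 0 \<le> d a" "0 \<le> \<mu>" "(\<Sum>a\<in>A. d a) = \<mu> * card A"
  shows "\<mu>^3 * card A \<le> (\<Sum>a\<in>A. d a ^ 2 * min (d a) (2*\<mu>))"
proof -
  have "\<mu>^3 * card A = (\<Sum>a\<in>A. 3 * \<mu>^2 * d a - 2 * \<mu>^3)"
    by (simp add: sum_subtractf sum_distrib_left[symmetric] assms(4) power2_eq_square power3_eq_cube)
  also have "\<dots> \<le> (\<Sum>a\<in>A. d a ^ 2 * min (d a) (2*\<mu>))"
    by (intro sum_mono sq_mult_min_ge_tangent assms)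
  finally show ?thesis .
qed

lemma large_weight_imp_few_bad:
  fixes d :: nat and b2 b3 C D :: real
  assumes "0 \<le> b2" "0 \<le> b3" "0 < C" "12 \<le> D"
    and weight: "C^2/100 * D * b2 + C/20 * b3 + D^3/64 < real d ^ 2 * min (real d) (C*D)"
  shows "D/4 \<le> d" and "b2 \<le> 400/C * (d choose 2)" and "b3 \<le> 600/C * (d choose 3)"
proof -
  have terms_nonneg: "0 \<le> C^2/100 * D * b2" "0 \<le> C/20 * b3" "0 < D^3/64"
    using assms(1-4) by simp_all
  have "real d ^ 2 * min (real d) (C*D) \<le> real d ^ 3"
    by (simp add: power2_eq_square power3_eq_cube mult_left_mono)
  then have b3: "C/20 * b3 < real d ^ 3" and "D^3/64 < real d ^ 3"
    using weight terms_nonneg by linarith+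
  then have "(D/4)^3 < real d ^ 3" by (simp add: power_divide)
  then show "D/4 \<le> d"
    using power_less_imp_less_base[of "D/4" 3 "real d"] by simp
  then have "3 \<le> d" using \<open>12 \<le> D\<close> by simp
  then have choose: "(real d / 2)^2 \<le> d choose 2" "(real d / 3)^3 \<le> d choose 3"
    using binomial_ge_n_over_k_pow_k[of 2 d] binomial_ge_n_over_k_pow_k[of 3 d] by simp_all
  have "real d ^ 2 * min (real d) (C*D) \<le> real d ^ 2 * (C*D)"
    by (simp add: mult_left_mono)
  then have "C^2/100 * D * b2 < real d ^ 2 * (C*D)"
    using weight terms_nonneg by linarith
  then have "(C * D / 100) * (C * b2) < (C * D / 100) * (100 * real d ^ 2)"
    by (simp add: algebra_simps power2_eq_square)
  then have "C * b2 \<le> 100 * real d ^ 2"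
    using assms(3,4) by (simp add: mult_less_cancel_left_pos)
  then have "b2 \<le> 400/C * (real d / 2)^2"
    using \<open>0 < C\<close> by (simp add: field_simps power2_eq_square)
  also have "\<dots> \<le> 400/C * (d choose 2)"
    using choose(1) \<open>0 < C\<close> by (intro mult_left_mono) auto
  finally show "b2 \<le> 400/C * (d choose 2)" .
  have "b3 < 20 * real d ^ 3 / C"
    using b3 \<open>0 < C\<close> by (simp add: field_simps)
  also have "\<dots> \<le> 600/C * (real d / 3)^3"
    using \<open>0 < C\<close> by (simp add: power_divide field_simps)
  also have "\<dots> \<le> 600/C * (d choose 3)"
    using choose(2) \<open>0 < C\<close> by (intro mult_left_mono) auto
  finally show "b3 \<le> 600/C * (d choose 3)" by simp
qed

lemma selection_constant_pos:
  fixes C :: real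
  assumes "1 \<le> C"
  shows "0 < C^3/8 - C^2 * (1 + C)/100 - C/20 - 1/64"
proof -
  have "C \<le> C^2" "C^2 \<le> C^3" "1 \<le> C^3"
    using power_increasing[of 1 2 C] power_increasing[of 2 3 C] assms by simp_all
  moreover have "C^3/8 - C^2 * (1 + C)/100 - C/20 - 1/64 = 23/200 * C^3 - C^2/100 - C/20 - 1/64"
    by (simp add: algebra_simps power2_eq_square power3_eq_cube)
  ultimately show ?thesis by linarith
qed

lemma exists_vertex_of_large_weight:
  fixes d b2 b3 :: "'a \<Rightarrow> real" and C D :: real
  assumes "finite X" "X \<noteq> {}" "\<And>x. x \<in> X \<Longrightarrow> 0 \<le> d x" "1 \<le> C" "0 < D"
    and degrees: "(\<Sum>x\<in>X. d x) = C * D / 2 * card X"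
    and pairs: "(\<Sum>x\<in>X. b2 x) \<le> (1 + C) * card X * D^2"
    and triples: "(\<Sum>x\<in>X. b3 x) \<le> card X * D^3"
  shows "\<exists>x\<in>X. C^2/100 * D * b2 x + C/20 * b3 x + D^3/64 < d x ^ 2 * min (d x) (C*D)"
proof -
  define w where "w x = d x ^ 2 * min (d x) (C*D) - C^2/100 * D * b2 x - C/20 * b3 x - D^3/64" for x
  have "(C*D/2)^3 * card X \<le> (\<Sum>x\<in>X. d x ^ 2 * min (d x) (C*D))"
    using sum_sq_mult_min_ge[of X d "C*D/2"] assms(1,3-6) by simp
  moreover have "C^2/100 * D * (\<Sum>x\<in>X. b2 x) \<le> C^2/100 * D * ((1 + C) * card X * D^2)"
    using pairs \<open>0 < D\<close> by (intro mult_left_mono) auto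
  moreover have "C/20 * (\<Sum>x\<in>X. b3 x) \<le> C/20 * (card X * D^3)"
    using triples \<open>1 \<le> C\<close> by (intro mult_left_mono) auto
  moreover have "(\<Sum>x\<in>X. w x) = (\<Sum>x\<in>X. d x ^ 2 * min (d x) (C*D))
      - C^2/100 * D * (\<Sum>x\<in>X. b2 x) - C/20 * (\<Sum>x\<in>X. b3 x) - card X * D^3/64"
    by (simp add: w_def sum_subtractf sum_distrib_left)
  ultimately have "(C*D/2)^3 * card X - C^2/100 * D * ((1 + C) * card X * D^2)
      - C/20 * (card X * D^3) - card X * D^3/64 \<le> (\<Sum>x\<in>X. w x)"
    by linarith
  also have "(C*D/2)^3 * card X - C^2/100 * D * ((1 + C) * card X * D^2)
      - C/20 * (card X * D^3) - card X * D^3/64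
      = card X * D^3 * (C^3/8 - C^2 * (1 + C)/100 - C/20 - 1/64)"
    by (simp add: field_simps power2_eq_square power3_eq_cube)
  finally have "card X * D^3 * (C^3/8 - C^2 * (1 + C)/100 - C/20 - 1/64) \<le> (\<Sum>x\<in>X. w x)" .
  moreover have "0 < card X * D^3"
    using assms(1,2,5) by (simp add: card_gt_0_iff)
  ultimately have "0 < (\<Sum>x\<in>X. w x)"
    using selection_constant_pos[OF \<open>1 \<le> C\<close>] by (meson mult_pos_pos order_less_le_trans)
  then obtain x where "x \<in> X" "0 < w x"
    using sum_nonpos[of X w] by (meson not_le)
  then have "C^2/100 * D * b2 x + C/20 * b3 x + D^3/64 < d x ^ 2 * min (d x) (C*D)"
    unfolding w_def by linarith
  with \<open>x \<in> X\<close> show ?thesis by blast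
qed

lemma exists_vertex_with_few_bad_subsets_in_nbhd:
  fixes N :: "'a \<Rightarrow> 'b set" and B2 B3 :: "'b set set" and C D :: real
  assumes "finite X" "X \<noteq> {}" "finite B2" "finite B3" "1 \<le> C" "12 \<le> D"
    and degrees: "(\<Sum>x\<in>X. card (N x)) = C * D / 2 * card X"
    and pairs: "(\<Sum>P\<in>B2. card {x\<in>X. P \<subseteq> N x}) \<le> (1 + C) * card X * D^2"
    and triples: "(\<Sum>T\<in>B3. card {x\<in>X. T \<subseteq> N x}) \<le> card X * D^3"
  shows "\<exists>x\<in>X. D/4 \<le> card (N x) \<and>
           card {P\<in>B2. P \<subseteq> N x} \<le> 400/C * (card (N x) choose 2) \<and>
           card {T\<in>B3. T \<subseteq> N x} \<le> 600/C * (card (N x) choose 3)"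
proof -
  have "(\<Sum>x\<in>X. card {P\<in>B2. P \<subseteq> N x}) = (\<Sum>P\<in>B2. card {x\<in>X. P \<subseteq> N x})"
    "(\<Sum>x\<in>X. card {T\<in>B3. T \<subseteq> N x}) = (\<Sum>T\<in>B3. card {x\<in>X. T \<subseteq> N x})"
    using assms(1,3,4) by (auto intro: sum_multicount_gen)
  then obtain x where "x \<in> X" and weight: "C^2/100 * D * card {P\<in>B2. P \<subseteq> N x}
      + C/20 * card {T\<in>B3. T \<subseteq> N x} + D^3/64 < real (card (N x)) ^ 2 * min (card (N x)) (C*D)"
    using exists_vertex_of_large_weight[of X "\<lambda>x. card (N x)" C D
        "\<lambda>x. card {P\<in>B2. P \<subseteq> N x}" "\<lambda>x. card {T\<in>B3. T \<subseteq> N x}"] assms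
    by (auto simp flip: of_nat_sum)
  then show ?thesis
    using large_weight_imp_few_bad[OF _ _ _ \<open>12 \<le> D\<close> weight] \<open>1 \<le> C\<close> by auto
qed

definition nbhd :: "'a set \<Rightarrow> ('b \<times> 'a) set \<Rightarrow> 'b \<Rightarrow> 'a set" where
  "nbhd Y L x = {y \<in> Y. (x, y) \<in> L}"

lemma sum_card_nbhd_supersets_eq_sum_card_Gamma:
  assumes "\<And>S. S \<in> B \<Longrightarrow> S \<subseteq> Y"
  shows "(\<Sum>S\<in>B. card {x\<in>X. S \<subseteq> nbhd Y L x}) = (\<Sum>S\<in>B. card (Gamma X L S))"
  using assms by (intro sum.cong refl arg_cong[where f = card]) (auto simp: Gamma_def nbhd_def)

lemma card_eq_sum_card_nbhd:
  assumes "finite X" "finite Y" "L \<subseteq> X \<times> Y"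
  shows "card L = (\<Sum>x\<in>X. card (nbhd Y L x))"
proof -
  have "L = Sigma X (nbhd Y L)" using assms(3) by (auto simp: nbhd_def)
  also have "card (Sigma X (nbhd Y L)) = (\<Sum>x\<in>X. card (nbhd Y L x))"
    using assms(1,2) by (intro card_SigmaI) (auto simp: nbhd_def)
  finally show ?thesis .
qed

lemma card_Gamma_le_if_not_good_pair:
  fixes K n :: nat and \<epsilon> C :: real and X Y Z P :: "'a set" and G and L :: "('a \<times> 'a) set"
  defines "F \<equiv> card {c \<in> forbidden_cycles_in K X Y Z G L. P \<subseteq> snd c}"
  assumes bad: "\<not> good_pair n \<epsilon> C K X Y Z G L P" and "0 < C" "0 < n" and "K = 0 \<Longrightarrow> F = 0"
  shows "card (Gamma X L P) \<le> real n powr (1 - 2*\<epsilon>) + C / K * real n powr (3*\<epsilon> - 1) * F"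
proof (cases "card (Gamma X L P) < real n powr (1 - 2*\<epsilon>)")
  case True
  moreover have "0 \<le> C / K * real n powr (3*\<epsilon> - 1) * F" using \<open>0 < C\<close> by simp
  ultimately show ?thesis by linarith
next
  case False
  define a where "a = real n powr (1 - 3*\<epsilon>)"
  have "0 < a" using \<open>0 < n\<close> by (simp add: a_def)
  have "real n powr (3*\<epsilon> - 1) = 1 / a"
    by (simp add: a_def powr_minus_divide[symmetric])
  from bad False have many: "K / C * a * card (Gamma X L P) < F"
    by (simp add: good_pair_def F_def a_def)
  have "0 < K"
  proof (rule ccontr)
    assume "\<not> 0 < K"
    then show False using many assms(5) by simp
  qed
  have "C / (K * a) * (K / C * a * card (Gamma X L P)) < C / (K * a) * F"
    using many \<open>0 < K\<close> \<open>0 < a\<close> \<open>0 < C\<close> by (intro mult_strict_left_mono) auto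
  then have "card (Gamma X L P) < C / K * real n powr (3*\<epsilon> - 1) * F"
    using \<open>0 < K\<close> \<open>0 < a\<close> \<open>0 < C\<close> \<open>real n powr (3*\<epsilon> - 1) = 1 / a\<close> by simp
  then show ?thesis using powr_ge_zero[of n "1 - 2*\<epsilon>"] by linarith
qed

lemma power_mult_powr: "0 < x \<Longrightarrow> x ^ k * x powr a = x powr (k + a)" for x :: real
  by (simp add: powr_add powr_realpow)

lemma finite_forbidden_cycles_in:
  assumes "finite X" "finite Y"
  shows "finite (forbidden_cycles_in K X Y Z G L)"
proof -
  have "forbidden_cycles_in K X Y Z G L \<subseteq> Pow X \<times> Pow Y"
    by (auto simp: forbidden_cycles_in_def four_cycles_def)
  then show ?thesis using assms finite_subset by blast
qed

lemma sum_card_forbidden_cycles_through_pairs_le: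
  assumes "finite X" "finite Y" "finite B" "\<And>P. P \<in> B \<Longrightarrow> card P = 2"
  shows "(\<Sum>P\<in>B. card {c \<in> forbidden_cycles_in K X Y Z G L. P \<subseteq> snd c})
           \<le> card (forbidden_cycles_in K X Y Z G L)"
  using finite_forbidden_cycles_in[OF assms(1,2)]
  by (rule sum_card_supersets_le_card[where k = 2])
    (use assms(3,4) in \<open>auto simp: forbidden_cycles_in_def four_cycles_def\<close>)

lemma sum_card_Gamma_bad_pairs_le:
  fixes K n :: nat and \<epsilon> C :: real and X Y Z :: "'a set" and L :: "('a \<times> 'a) set"
  assumes "finite X" "finite Y" "card Y = n" "0 < n" "0 < C" "\<epsilon> \<le> 1/5"
    and forbidden: "card (forbidden_cycles_in K X Y Z G L) \<le> K * real n powr (3 + 1/5 - \<epsilon>)"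
  shows "(\<Sum>P | P \<subseteq> Y \<and> card P = 2 \<and> \<not> good_pair n \<epsilon> C K X Y Z G L P. real (card (Gamma X L P)))
           \<le> (1 + C) * real n powr (3 - 2*\<epsilon>)"
proof -
  define B where "B = {P. P \<subseteq> Y \<and> card P = 2 \<and> \<not> good_pair n \<epsilon> C K X Y Z G L P}"
  define FC where "FC = forbidden_cycles_in K X Y Z G L"
  define F where "F P = card {c \<in> FC. P \<subseteq> snd c}" for P
  have "(\<Sum>P\<in>B. F P) \<le> card FC"
    unfolding F_def FC_def using assms(1,2)
    by (rule sum_card_forbidden_cycles_through_pairs_le) (use \<open>finite Y\<close> in \<open>auto simp: B_def\<close>)
  have no_forbidden: "K = 0 \<Longrightarrow> F P = 0" for P
    using forbidden finite_forbidden_cycles_in[OF assms(1,2)] by (simp add: F_def FC_def)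
  have "(\<Sum>P\<in>B. real (card (Gamma X L P)))
      \<le> (\<Sum>P\<in>B. real n powr (1 - 2*\<epsilon>) + C / K * real n powr (3*\<epsilon> - 1) * F P)"
  proof (rule sum_mono)
    fix P assume "P \<in> B"
    then show "card (Gamma X L P) \<le> real n powr (1 - 2*\<epsilon>) + C / K * real n powr (3*\<epsilon> - 1) * F P"
      using card_Gamma_le_if_not_good_pair[of n \<epsilon> C K X Y Z G L P] no_forbidden[of P] assms(4,5)
      unfolding B_def F_def FC_def by blast
  qed
  also have "\<dots> = card B * real n powr (1 - 2*\<epsilon>) + C / K * real n powr (3*\<epsilon> - 1) * (\<Sum>P\<in>B. F P)"
    by (simp add: sum.distrib sum_distrib_left)
  also have "\<dots> \<le> real n ^ 2 * real n powr (1 - 2*\<epsilon>) + C * real n powr (3 - 2*\<epsilon>)"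
  proof (rule add_mono)
    have "card B \<le> n ^ 2"
      using card_subsets_of_card_le_pow[OF \<open>finite Y\<close>] assms(3) by (simp add: B_def)
    then show "card B * real n powr (1 - 2*\<epsilon>) \<le> real n ^ 2 * real n powr (1 - 2*\<epsilon>)"
      by (intro mult_right_mono) (simp_all flip: of_nat_power)
    have "C / K * real n powr (3*\<epsilon> - 1) * (\<Sum>P\<in>B. F P)
        \<le> C / K * real n powr (3*\<epsilon> - 1) * (K * real n powr (3 + 1/5 - \<epsilon>))"
    proof (intro mult_left_mono)
      have "real (\<Sum>P\<in>B. F P) \<le> card FC"
        using \<open>(\<Sum>P\<in>B. F P) \<le> card FC\<close> by linarith
      then show "real (\<Sum>P\<in>B. F P) \<le> K * real n powr (3 + 1/5 - \<epsilon>)"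
        using forbidden unfolding FC_def by linarith
    qed (use assms(5) in auto)
    also have "\<dots> \<le> C * real n powr (11/5 + 2*\<epsilon>)"
      using assms(5) by (simp add: powr_add[symmetric] algebra_simps)
    also have "\<dots> \<le> C * real n powr (3 - 2*\<epsilon>)"
      using assms(4-6) by (intro mult_left_mono powr_mono) auto
    finally show "C / K * real n powr (3*\<epsilon> - 1) * (\<Sum>P\<in>B. F P) \<le> C * real n powr (3 - 2*\<epsilon>)" .
  qed
  also have "\<dots> = (1 + C) * real n powr (3 - 2*\<epsilon>)"
    using assms(4) by (simp add: power_mult_powr algebra_simps)
  finally show ?thesis unfolding B_def .
qed

lemma sum_card_Gamma_bad_triples_le:
  assumes "finite Y" "card Y = n" "0 < n"
  shows "(\<Sum>T | T \<subseteq> Y \<and> card T = 3 \<and> \<not> good_triple n \<epsilon> X L T. real (card (Gamma X L T)))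
           \<le> real n powr (4 - 3*\<epsilon>)"
proof -
  define B where "B = {T. T \<subseteq> Y \<and> card T = 3 \<and> \<not> good_triple n \<epsilon> X L T}"
  have "(\<Sum>T\<in>B. real (card (Gamma X L T))) \<le> (\<Sum>T\<in>B. real n powr (1 - 3*\<epsilon>))"
    by (intro sum_mono) (auto simp: B_def good_triple_def)
  also have "\<dots> \<le> real n ^ 3 * real n powr (1 - 3*\<epsilon>)"
  proof -
    have "card B \<le> n ^ 3"
      using card_subsets_of_card_le_pow[OF \<open>finite Y\<close>] assms(2) by (simp add: B_def)
    then show ?thesis by (simp add: mult_right_mono flip: of_nat_power)
  qed
  also have "\<dots> = real n powr (4 - 3*\<epsilon>)"
    using assms(3) by (simp add: power_mult_powr)
  finally show ?thesis unfolding B_def .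
qed

lemma dense_nbhd_with_few_bad_pairs_and_triples:
  fixes X Y Z :: "'a set" and L :: "('a \<times> 'a) set" and K n :: nat and \<epsilon> C :: real
  assumes "tripartite_3graph X Y Z G" "card X = n" "card Y = n" "L \<subseteq> X \<times> Y"
    and edges: "real (card L) = (C / 2) * real n powr (2 - \<epsilon>)"
    and forbidden: "real (card (forbidden_cycles_in K X Y Z G L)) \<le> real K * real n powr (3 + 1/5 - \<epsilon>)"
    and "\<epsilon> \<le> 1/5" "1 \<le> C" and large: "12 \<le> real n powr (1 - \<epsilon>)"
  shows "\<exists>Y' \<subseteq> Y. real (card Y') \<ge> real n powr (1 - \<epsilon>) / 4 \<and>
           real (card {P. P \<subseteq> Y' \<and> card P = 2 \<and> \<not> good_pair n \<epsilon> C K X Y Z G L P})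
             \<le> (400 / C) * real (card Y' choose 2) \<and>
           real (card {T. T \<subseteq> Y' \<and> card T = 3 \<and> \<not> good_triple n \<epsilon> X L T})
             \<le> (600 / C) * real (card Y' choose 3)"
proof -
  define D where "D = real n powr (1 - \<epsilon>)"
  define B2 where "B2 = {P. P \<subseteq> Y \<and> card P = 2 \<and> \<not> good_pair n \<epsilon> C K X Y Z G L P}"
  define B3 where "B3 = {T. T \<subseteq> Y \<and> card T = 3 \<and> \<not> good_triple n \<epsilon> X L T}"
  have "finite X" "finite Y"
    using assms(1) by (auto simp: tripartite_3graph_def)
  have "0 < n" using large by (cases n) auto
  then have "X \<noteq> {}" using assms(2) by auto
  have "finite B2" "finite B3" using \<open>finite Y\<close> by (simp_all add: B2_def B3_def)
  have powers: "real n powr (2 - \<epsilon>) = n * D" "real n powr (3 - 2*\<epsilon>) = n * D^2"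
      "real n powr (4 - 3*\<epsilon>) = n * D^3"
    using \<open>0 < n\<close> by (simp_all add: D_def powr_add[symmetric] powr_mult_base power2_eq_square power3_eq_cube)
  have "\<exists>x\<in>X. D/4 \<le> card (nbhd Y L x) \<and>
      card {P\<in>B2. P \<subseteq> nbhd Y L x} \<le> 400/C * (card (nbhd Y L x) choose 2) \<and>
      card {T\<in>B3. T \<subseteq> nbhd Y L x} \<le> 600/C * (card (nbhd Y L x) choose 3)"
  proof (rule exists_vertex_with_few_bad_subsets_in_nbhd)
    show "(\<Sum>x\<in>X. card (nbhd Y L x)) = C * D / 2 * card X"
      using edges card_eq_sum_card_nbhd[OF \<open>finite X\<close> \<open>finite Y\<close> assms(4)] assms(2) powers(1)
      by simp
    have "(\<Sum>P\<in>B2. real (card (Gamma X L P))) \<le> (1 + C) * real n powr (3 - 2*\<epsilon>)"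
      unfolding B2_def using \<open>finite X\<close> \<open>finite Y\<close> assms(3,7,8) \<open>0 < n\<close> forbidden
      by (intro sum_card_Gamma_bad_pairs_le) auto
    then show "(\<Sum>P\<in>B2. card {x\<in>X. P \<subseteq> nbhd Y L x}) \<le> (1 + C) * card X * D^2"
      using assms(2) powers(2) sum_card_nbhd_supersets_eq_sum_card_Gamma[of B2 Y X L]
      by (simp add: B2_def)
    have "(\<Sum>T\<in>B3. real (card (Gamma X L T))) \<le> real n powr (4 - 3*\<epsilon>)"
      unfolding B3_def using \<open>finite Y\<close> assms(3) \<open>0 < n\<close>
      by (rule sum_card_Gamma_bad_triples_le)
    then show "(\<Sum>T\<in>B3. card {x\<in>X. T \<subseteq> nbhd Y L x}) \<le> card X * D^3"
      using assms(2) powers(3) sum_card_nbhd_supersets_eq_sum_card_Gamma[of B3 Y X L]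
      by (simp add: B3_def)
  qed (use \<open>finite X\<close> \<open>X \<noteq> {}\<close> \<open>finite B2\<close> \<open>finite B3\<close> assms(8) large D_def in auto)
  then obtain x where "D/4 \<le> card (nbhd Y L x)"
      "card {P\<in>B2. P \<subseteq> nbhd Y L x} \<le> 400/C * (card (nbhd Y L x) choose 2)"
      "card {T\<in>B3. T \<subseteq> nbhd Y L x} \<le> 600/C * (card (nbhd Y L x) choose 3)"
    by blast
  moreover have "{P\<in>B2. P \<subseteq> nbhd Y L x} = {P. P \<subseteq> nbhd Y L x \<and> card P = 2 \<and> \<not> good_pair n \<epsilon> C K X Y Z G L P}"
    "{T\<in>B3. T \<subseteq> nbhd Y L x} = {T. T \<subseteq> nbhd Y L x \<and> card T = 3 \<and> \<not> good_triple n \<epsilon> X L T}"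
    by (auto simp: B2_def B3_def nbhd_def)
  ultimately show ?thesis
    by (intro exI[of _ "nbhd Y L x"]) (auto simp: D_def nbhd_def)
qed

theorem lemma3p2:
  fixes VH :: "'b set" and EH :: "'b set set" and \<epsilon> C :: real
  assumes "three_graph VH EH" and "\<epsilon> \<le> 1/5" and "C \<ge> 1"
  shows "\<exists>n0::nat. \<forall>n\<ge>n0. \<forall>(X::nat set) Y Z G (L :: (nat \<times> nat) set).
           tripartite_3graph X Y Z G \<and> card X = n \<and> card Y = n \<and> card Z = n \<and>
           L \<subseteq> X \<times> Y \<and> real (card L) = (C / 2) * real n powr (2 - \<epsilon>) \<and>
           real (card (forbidden_cycles_in (K_H VH) X Y Z G L))
             \<le> real (K_H VH) * real n powr (3 + 1/5 - \<epsilon>)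
           \<longrightarrow> (\<exists>Y' \<subseteq> Y. real (card Y') \<ge> real n powr (1 - \<epsilon>) / 4 \<and>
                 real (card {P. P \<subseteq> Y' \<and> card P = 2 \<and>
                                \<not> good_pair n \<epsilon> C (K_H VH) X Y Z G L P})
                   \<le> (400 / C) * real (card Y' choose 2) \<and>
                 real (card {T. T \<subseteq> Y' \<and> card T = 3 \<and> \<not> good_triple n \<epsilon> X L T})
                   \<le> (600 / C) * real (card Y' choose 3))"
proof -
  have large: "12 \<le> real n powr (1 - \<epsilon>)" if "12^5 \<le> n" for n :: nat
  proof -
    have "(12::real) = (12^5) powr (1/5)"
      by (simp add: powr_powr flip: powr_realpow)
    also have "\<dots> \<le> real n powr (1/5)"
      using that by (intro powr_mono2) (auto simp flip: of_nat_le_iff)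
    also have "\<dots> \<le> real n powr (1 - \<epsilon>)"
      using that \<open>\<epsilon> \<le> 1/5\<close> by (intro powr_mono) auto
    finally show ?thesis .
  qed
  show ?thesis
    by (intro exI[of _ "12^5"] allI impI, elim conjE, rule dense_nbhd_with_few_bad_pairs_and_triples)
      (use large assms(2,3) in simp_all)
qed

end
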